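(* Let $A$ and $B$ be two $m\times m$ coloring matrices. If $A$ and $B$ are tree coloring equivalent, then the sum of all entries of $A^TA+A^2$ equals the sum of all entries of $B^TB+B^2$.
   Context: A plane tree is an unlabeled rooted tree in which the children of every vertex are linearly ordered. A coloring matrix is an $m\times m$ matrix $A=(a_{ij})$ with entries in $\{0,1\}$. An $A$-coloring of a plane tree assigns to each vertex a color in $\{1,\dots,m\}$ such that whenever a vertex of color $j$ is a child of a vertex of color $i$, $a_{ij}=1$. Let $t_A(n)$ be the number of pairs (plane tree with $n$ vertices, $A$-coloring of it). Two $m\times m$ coloring matrices $A,B$ are tree coloring equivalent if $t_A(n)=t_B(n)$ for all $n\ge1$. *)

theory Defs
  imports Main
begin

text \<open>Plane trees: rooted trees with linearly ordered children (rose trees).\<close>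
datatype ptree = PNode "ptree list"

datatype ltree = LNode nat "ltree list"

fun shape :: "ltree \<Rightarrow> ptree" where
  "shape (LNode c ts) = PNode (map shape ts)"

fun psize :: "ptree \<Rightarrow> nat" where
  "psize (PNode ts) = Suc (sum_list (map psize ts))"

fun lroot :: "ltree \<Rightarrow> nat" where
  "lroot (LNode c ts) = c"

fun is_coloring :: "nat \<Rightarrow> (nat \<Rightarrow> nat \<Rightarrow> nat) \<Rightarrow> ltree \<Rightarrow> bool" where
  "is_coloring m A (LNode c ts) =
     (c \<in> {1..m} \<and> (\<forall>t\<in>set ts. A c (lroot t) = 1 \<and> is_coloring m A t))"

definition coloring_matrix :: "nat \<Rightarrow> (nat \<Rightarrow> nat \<Rightarrow> nat) \<Rightarrow> bool" where
  "coloring_matrix m A \<longleftrightarrow> (\<forall>i\<in>{1..m}. \<forall>j\<in>{1..m}. A i j \<in> {0,1})"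

text \<open>t_A(n): number of pairs (plane tree T with n vertices, A-colouring of T).
  A pair is represented by the pair (T, labelled tree of shape T).\<close>
definition tcount :: "nat \<Rightarrow> (nat \<Rightarrow> nat \<Rightarrow> nat) \<Rightarrow> nat \<Rightarrow> nat" where
  "tcount m A n = card {(T, L). psize T = n \<and> shape L = T \<and> is_coloring m A L}"

definition tree_coloring_equivalent :: "nat \<Rightarrow> (nat \<Rightarrow> nat \<Rightarrow> nat) \<Rightarrow> (nat \<Rightarrow> nat \<Rightarrow> nat) \<Rightarrow> bool" where
  "tree_coloring_equivalent m A B \<longleftrightarrow> (\<forall>n\<ge>1. tcount m A n = tcount m B n)"

end

theory Submission
  imports Defs
begin

text \<open>A plane tree with three vertices is either a path or a cherry (a root with two leaves).
  The A-colourings of the path with colours i, k, j from the root down number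
  sum a_ik a_kj over i, j, k, the entry sum of A^2; those of the cherry with root k and leaves
  i, j number sum a_ki a_kj, the entry sum of A^T A. So the entry sum of A^T A + A^2 is t_A(3),
  which tree coloring equivalence preserves.\<close>

definition colorings :: "nat \<Rightarrow> (nat \<Rightarrow> nat \<Rightarrow> nat) \<Rightarrow> nat \<Rightarrow> ltree set" where
  "colorings m A n = {L. psize (shape L) = n \<and> is_coloring m A L}"

lemma tcount_eq_card_colorings: "tcount m A n = card (colorings m A n)"
proof -
  have "{(T, L). psize T = n \<and> shape L = T \<and> is_coloring m A L} =
        (\<lambda>L. (shape L, L)) ` colorings m A n"
    by (auto simp: colorings_def)
  moreover have "inj (\<lambda>L. (shape L, L))"
    by (simp add: inj_def)
  ultimately show ?thesis
    unfolding tcount_def by (simp add: card_image inj_on_subset)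
qed

lemma psize_ge_1: "psize T \<ge> 1"
  by (cases T) simp

lemma length_le_sum_list_psize: "length ts \<le> sum_list (map psize ts)"
proof (induction ts)
  case (Cons t ts)
  then show ?case using psize_ge_1[of t] by simp
qed simp

lemma psize_shape_eq_1_iff: "psize (shape L) = 1 \<longleftrightarrow> (\<exists>c. L = LNode c [])"
proof (cases L)
  case (LNode c ts)
  then show ?thesis
    using psize_ge_1[of "shape (hd ts)"] by (cases ts) auto
qed

lemma psize_shape_eq_2_iff: "psize (shape L) = 2 \<longleftrightarrow> (\<exists>c d. L = LNode c [LNode d []])"
proof (cases L)
  case (LNode c ts)
  have "sum_list (map psize (map shape ts)) = 1 \<longleftrightarrow> (\<exists>d. ts = [LNode d []])"
  proof
    assume size: "sum_list (map psize (map shape ts)) = 1"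
    then obtain u where "ts = [u]"
      using length_le_sum_list_psize[of "map shape ts"] by (cases ts) auto
    with size show "\<exists>d. ts = [LNode d []]"
      using psize_shape_eq_1_iff by auto
  qed auto
  with LNode show ?thesis by auto
qed

lemma psize_shape_eq_3_iff:
  "psize (shape L) = 3 \<longleftrightarrow>
     (\<exists>i j k. L = LNode i [LNode k [LNode j []]] \<or> L = LNode k [LNode i [], LNode j []])"
proof (cases L)
  case (LNode c ts)
  have "sum_list (map psize (map shape ts)) = 2 \<longleftrightarrow>
        (\<exists>k j. ts = [LNode k [LNode j []]]) \<or> (\<exists>i j. ts = [LNode i [], LNode j []])"
  proof
    assume size: "sum_list (map psize (map shape ts)) = 2"
    have "ts \<noteq> []" "length ts \<le> 2"
      using size length_le_sum_list_psize[of "map shape ts"] by auto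
    then consider u where "ts = [u]" | u v where "ts = [u, v]"
      by (cases ts; cases "tl ts") auto
    then show "(\<exists>k j. ts = [LNode k [LNode j []]]) \<or> (\<exists>i j. ts = [LNode i [], LNode j []])"
    proof cases
      case 1
      with size show ?thesis using psize_shape_eq_2_iff by auto
    next
      case (2 u v)
      with size have "psize (shape u) = 1" "psize (shape v) = 1"
        using psize_ge_1[of "shape u"] psize_ge_1[of "shape v"] by auto
      with 2 show ?thesis using psize_shape_eq_1_iff by auto
    qed
  qed auto
  with LNode show ?thesis by (auto simp: numeral_eq_Suc)
qed

lemma card_eq_sum_if_le_1:
  fixes f :: "'a \<Rightarrow> nat"
  assumes "finite X" and "\<And>x. x \<in> X \<Longrightarrow> f x \<le> 1"
  shows "card {x\<in>X. f x = 1} = sum f X"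
proof -
  have "card {x\<in>X. f x = 1} = (\<Sum>x\<in>X. if f x = 1 then 1 else 0)"
    using assms(1) by (simp only: card_eq_sum sum.inter_filter)
  also have "\<dots> = sum f X"
    using assms(2) by (intro sum.cong) (auto simp: le_Suc_eq)
  finally show ?thesis .
qed

lemma card_triples_eq_sum:
  fixes g :: "'a \<Rightarrow> 'b \<Rightarrow> 'c \<Rightarrow> nat"
  assumes "finite I" "finite J" "finite K"
    and "\<And>i j k. i \<in> I \<Longrightarrow> j \<in> J \<Longrightarrow> k \<in> K \<Longrightarrow> g i j k \<le> 1"
  shows "card {(i, j, k) \<in> I \<times> J \<times> K. g i j k = 1} = (\<Sum>i\<in>I. \<Sum>j\<in>J. \<Sum>k\<in>K. g i j k)"
proof -
  have "{(i, j, k) \<in> I \<times> J \<times> K. g i j k = 1} = {x \<in> I \<times> J \<times> K. (\<lambda>(i, j, k). g i j k) x = 1}"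
    by auto
  also have "card \<dots> = (\<Sum>(i, j, k)\<in>I \<times> J \<times> K. g i j k)"
    using assms by (intro card_eq_sum_if_le_1) auto
  finally show ?thesis
    by (simp add: sum.cartesian_product)
qed

definition path3 :: "nat \<times> nat \<times> nat \<Rightarrow> ltree" where
  "path3 = (\<lambda>(i, j, k). LNode i [LNode k [LNode j []]])"

definition cherry3 :: "nat \<times> nat \<times> nat \<Rightarrow> ltree" where
  "cherry3 = (\<lambda>(i, j, k). LNode k [LNode i [], LNode j []])"

lemma colorings_3:
  "colorings m A 3 =
     path3 ` {(i, j, k) \<in> {1..m} \<times> {1..m} \<times> {1..m}. A i k * A k j = 1} \<union>
     cherry3 ` {(i, j, k) \<in> {1..m} \<times> {1..m} \<times> {1..m}. A k i * A k j = 1}"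
  unfolding colorings_def psize_shape_eq_3_iff path3_def cherry3_def by (auto simp: image_iff)

lemma card_colorings_3:
  "card (colorings m A 3) =
     card {(i, j, k) \<in> {1..m} \<times> {1..m} \<times> {1..m}. A i k * A k j = 1} +
     card {(i, j, k) \<in> {1..m} \<times> {1..m} \<times> {1..m}. A k i * A k j = 1}"
proof -
  have "inj path3" "inj cherry3"
    by (auto simp: inj_def path3_def cherry3_def)
  moreover have "path3 ` X \<inter> cherry3 ` Y = {}" for X Y
    by (auto simp: path3_def cherry3_def)
  ultimately have card_union: "card (path3 ` X \<union> cherry3 ` Y) = card X + card Y"
    if "finite X" "finite Y" for X Y
    using that by (simp add: card_Un_disjoint card_image inj_on_subset)
  show ?thesis
    unfolding colorings_3
    by (rule card_union; rule finite_subset[where B = "{1..m} \<times> {1..m} \<times> {1..m}"]) auto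
qed

lemma tcount_3:
  assumes "coloring_matrix m A"
  shows "tcount m A 3 = (\<Sum>i=1..m. \<Sum>j=1..m. \<Sum>k=1..m. A k i * A k j + A i k * A k j)"
proof -
  have product_le_1: "A a b * A c d \<le> 1"
    if "a \<in> {1..m}" "b \<in> {1..m}" "c \<in> {1..m}" "d \<in> {1..m}" for a b c d
    using assms that unfolding coloring_matrix_def by (fastforce intro: mult_le_one)
  show ?thesis
    unfolding tcount_eq_card_colorings card_colorings_3 sum.distrib
    by (subst (1 2) card_triples_eq_sum) (simp_all add: product_le_1[simplified] add.commute)
qed

theorem theorem11:
  fixes m :: nat and A B :: "nat \<Rightarrow> nat \<Rightarrow> nat"
  assumes "coloring_matrix m A" and "coloring_matrix m B"
    and "tree_coloring_equivalent m A B"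
  shows "(\<Sum>i=1..m. \<Sum>j=1..m. \<Sum>k=1..m. A k i * A k j + A i k * A k j) =
         (\<Sum>i=1..m. \<Sum>j=1..m. \<Sum>k=1..m. B k i * B k j + B i k * B k j)"
proof -
  have "tcount m A 3 = tcount m B 3"
    using assms(3) unfolding tree_coloring_equivalent_def by simp
  then show ?thesis
    using tcount_3[OF assms(1)] tcount_3[OF assms(2)] by simp
qed

end
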